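(* Let $k$ be an even positive integer, let $A,B$ be finite subsets of an abelian group, and let $C\subseteq A+B$. Let $\Gamma_C$ be the bipartite graph with vertex classes $A$ and $B$ (taken as disjoint copies) in which $a\in A$ and $b\in B$ are adjacent if and only if $a+b\in C$. Suppose that for every pair $(b,b')\in B\times B$ there are at least $w>0$ walks of length $k$ in $\Gamma_C$ from $b$ to $b'$. Then $|B-B|\le |C|^k/w$.
   Context: For subsets $X,Y$ of an abelian group, $X+Y=\{x+y:x\in X,y\in Y\}$ and $X-Y=\{x-y:x\in X,y\in Y\}$. A walk of length $k$ is a sequence of $k+1$ vertices with consecutive vertices adjacent. *)

theory Defs
  imports Complex_Main
begin

definition sumset :: "'a::ab_group_add set \<Rightarrow> 'a set \<Rightarrow> 'a set" where
  "sumset X Y = {x + y | x y. x \<in> X \<and> y \<in> Y}"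

definition diffset :: "'a::ab_group_add set \<Rightarrow> 'a set \<Rightarrow> 'a set" where
  "diffset X Y = {x - y | x y. x \<in> X \<and> y \<in> Y}"

text \<open>The bipartite graph Gamma_C: vertex classes are disjoint copies of A (tagged Inl)
  and B (tagged Inr); Inl a and Inr b are adjacent iff a + b is in C.\<close>
definition bip_adj :: "'a::ab_group_add set \<Rightarrow> 'a set \<Rightarrow> 'a set \<Rightarrow> 'a + 'a \<Rightarrow> 'a + 'a \<Rightarrow> bool" where
  "bip_adj A B C u v = (case (u, v) of
      (Inl a, Inr b) \<Rightarrow> a \<in> A \<and> b \<in> B \<and> a + b \<in> C
    | (Inr b, Inl a) \<Rightarrow> a \<in> A \<and> b \<in> B \<and> a + b \<in> C
    | _ \<Rightarrow> False)"

definition walks :: "('v \<Rightarrow> 'v \<Rightarrow> bool) \<Rightarrow> nat \<Rightarrow> 'v \<Rightarrow> 'v \<Rightarrow> 'v list set" where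
  "walks adj k u v = {p. length p = Suc k \<and> hd p = u \<and> last p = v \<and>
                        (\<forall>i<k. adj (p ! i) (p ! Suc i))}"

end

theory Submission
  imports Defs
begin

text \<open>Record a walk of length \<open>k\<close> in \<open>\<Gamma>\<^sub>C\<close> by the list of its \<open>k\<close> edge labels \<open>a + b \<in> C\<close>.
  Starting from a known vertex the labels determine the walk, and for a walk from \<open>b\<close> to \<open>b'\<close>
  with \<open>k\<close> even their alternating sum telescopes to \<open>b - b'\<close>. Hence, choosing for every
  \<open>d \<in> B - B\<close> one pair \<open>(b, b')\<close> with \<open>d = b - b'\<close>, the walks from \<open>b\<close> to \<open>b'\<close> for the various \<open>d\<close>
  give at least \<open>w |B - B|\<close> distinct words in \<open>C\<^sup>k\<close>.\<close>

definition untag :: "'a + 'a \<Rightarrow> 'a" where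
  "untag = case_sum id id"

definition edge_labels :: "nat \<Rightarrow> ('a::ab_group_add + 'a) list \<Rightarrow> 'a list" where
  "edge_labels k p = map (\<lambda>i. untag (p ! i) + untag (p ! Suc i)) [0..<k]"

definition alternating_sum :: "'a::ab_group_add list \<Rightarrow> 'a" where
  "alternating_sum xs = (\<Sum>i<length xs. if even i then xs ! i else - (xs ! i))"

lemma alternating_telescope:
  fixes v :: "nat \<Rightarrow> 'a::ab_group_add"
  shows "(\<Sum>i<n. if even i then v i + v (Suc i) else - (v i + v (Suc i)))
         = v 0 + (if even n then - v n else v n)"
  by (induction n) (auto simp: algebra_simps)

lemma card_mult_le_of_inj_Sigma:
  assumes "finite D" "finite S"
    and inj: "inj_on f (SIGMA d:D. W d)" and img: "f ` (SIGMA d:D. W d) \<subseteq> S"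
    and large: "\<And>d. d \<in> D \<Longrightarrow> w \<le> real (card (W d))"
  shows "real (card D) * w \<le> real (card S)"
proof -
  have fin_Sigma: "finite (SIGMA d:D. W d)"
    using finite_imageD[OF finite_subset[OF img \<open>finite S\<close>] inj] .
  have fin_W: "finite (W d)" if "d \<in> D" for d
  proof -
    have "Pair d ` W d \<subseteq> (SIGMA d:D. W d)" using that by auto
    then show ?thesis
      using finite_subset[OF _ fin_Sigma] finite_imageD inj_on_def by (metis Pair_inject)
  qed
  have "real (card D) * w = (\<Sum>d\<in>D. w)" by simp
  also have "\<dots> \<le> (\<Sum>d\<in>D. real (card (W d)))" using large by (rule sum_mono)
  also have "\<dots> = real (card (SIGMA d:D. W d))"
    using card_SigmaI[OF \<open>finite D\<close>, of W] fin_W by (simp add: of_nat_sum)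
  also have "\<dots> \<le> real (card S)"
    using card_inj_on_le[OF inj img \<open>finite S\<close>] by simp
  finally show ?thesis .
qed

lemma finite_sumset:
  assumes "finite A" "finite B"
  shows "finite (sumset A B)"
proof -
  have "sumset A B = (\<lambda>(x, y). x + y) ` (A \<times> B)" by (auto simp: sumset_def)
  then show ?thesis using assms by simp
qed

lemma finite_diffset:
  assumes "finite A" "finite B"
  shows "finite (diffset A B)"
proof -
  have "diffset A B = (\<lambda>(x, y). x - y) ` (A \<times> B)" by (auto simp: diffset_def)
  then show ?thesis using assms by simp
qed

lemma walks_length: "p \<in> walks adj k u v \<Longrightarrow> length p = Suc k"
  by (simp add: walks_def)

lemma walks_nth_0: "p \<in> walks adj k u v \<Longrightarrow> p ! 0 = u"
  by (cases p) (auto simp: walks_def)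

lemma walks_nth_length: "p \<in> walks adj k u v \<Longrightarrow> p ! k = v"
  by (cases p rule: rev_cases) (auto simp: walks_def nth_append)

lemma walks_adj: "p \<in> walks adj k u v \<Longrightarrow> i < k \<Longrightarrow> adj (p ! i) (p ! Suc i)"
  by (simp add: walks_def)

lemma bip_adj_untag: "bip_adj A B C u v \<Longrightarrow> untag u + untag v \<in> C"
  by (cases u; cases v) (auto simp: bip_adj_def untag_def add.commute)

lemma walks_from_Inr_alternate:
  assumes p: "p \<in> walks (bip_adj A B C) k (Inr b) v" and "i \<le> k"
  shows "p ! i = (if even i then Inr else Inl) (untag (p ! i))"
  using \<open>i \<le> k\<close>
proof (induction i)
  case 0
  then show ?case using walks_nth_0[OF p] by (simp add: untag_def)
next
  case (Suc i)
  then have "bip_adj A B C (p ! i) (p ! Suc i)"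
    and "p ! i = (if even i then Inr else Inl) (untag (p ! i))"
    using walks_adj[OF p] by auto
  then show ?case
    by (cases "p ! Suc i") (auto simp: bip_adj_def untag_def split: sum.splits if_splits)
qed

lemma edge_labels_in_lists:
  "p \<in> walks (bip_adj A B C) k u v \<Longrightarrow> edge_labels k p \<in> {xs. set xs \<subseteq> C \<and> length xs = k}"
  by (auto simp: edge_labels_def intro!: bip_adj_untag walks_adj)

lemma alternating_sum_edge_labels:
  assumes p: "p \<in> walks (bip_adj A B C) k (Inr b) (Inr b')" and "even k"
  shows "alternating_sum (edge_labels k p) = b - b'"
proof -
  have "alternating_sum (edge_labels k p)
      = (\<Sum>i<k. if even i then untag (p ! i) + untag (p ! Suc i)
                else - (untag (p ! i) + untag (p ! Suc i)))"
    unfolding alternating_sum_def edge_labels_def by (intro sum.cong) auto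
  also have "\<dots> = untag (p ! 0) - untag (p ! k)"
    using alternating_telescope[of "\<lambda>i. untag (p ! i)" k] \<open>even k\<close> by simp
  also have "\<dots> = b - b'"
    using walks_nth_0[OF p] walks_nth_length[OF p] by (simp add: untag_def)
  finally show ?thesis .
qed

lemma edge_labels_inj:
  assumes p: "p \<in> walks (bip_adj A B C) k (Inr b) (Inr b1)"
    and q: "q \<in> walks (bip_adj A B C) k (Inr b) (Inr b2)"
    and labels: "edge_labels k p = edge_labels k q"
  shows "p = q"
proof -
  have "p ! i = q ! i" if "i \<le> k" for i
    using that
  proof (induction i)
    case 0
    then show ?case using walks_nth_0[OF p] walks_nth_0[OF q] by simp
  next
    case (Suc i)
    have "edge_labels k p ! i = edge_labels k q ! i" using labels by simp
    with Suc have "untag (p ! Suc i) = untag (q ! Suc i)"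
      by (simp add: edge_labels_def)
    then show ?case
      using walks_from_Inr_alternate[OF p Suc.prems] walks_from_Inr_alternate[OF q Suc.prems]
      by metis
  qed
  moreover have "length p = length q" using walks_length[OF p] walks_length[OF q] by simp
  ultimately show ?thesis
    using walks_length[OF p] by (auto intro: nth_equalityI)
qed

theorem lemma2p2:
  fixes A B C :: "'a::ab_group_add set" and k :: nat and w :: real
  assumes "even k" and "k > 0"
    and "finite A" and "finite B"
    and "C \<subseteq> sumset A B"
    and "w > 0"
    and "\<forall>b\<in>B. \<forall>b'\<in>B. real (card (walks (bip_adj A B C) k (Inr b) (Inr b'))) \<ge> w"
  shows "real (card (diffset B B)) \<le> real (card C) ^ k / w"
proof -
  have "finite C" using assms(3-5) finite_sumset finite_subset by blast
  have "\<forall>d\<in>diffset B B. \<exists>r\<in>B \<times> B. d = fst r - snd r"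
    by (auto simp: diffset_def)
  then obtain rep where rep: "\<And>d. d \<in> diffset B B \<Longrightarrow> rep d \<in> B \<times> B \<and> d = fst (rep d) - snd (rep d)"
    by metis
  define W where "W d = walks (bip_adj A B C) k (Inr (fst (rep d))) (Inr (snd (rep d)))" for d
  have "inj_on (\<lambda>(d, p). edge_labels k p) (SIGMA d:diffset B B. W d)"
  proof (rule inj_onI, clarsimp)
    fix d p d' q assume d: "d \<in> diffset B B" and d': "d' \<in> diffset B B"
      and p: "p \<in> W d" and q: "q \<in> W d'" and labels: "edge_labels k p = edge_labels k q"
    have "d = alternating_sum (edge_labels k p)"
      using rep[OF d] alternating_sum_edge_labels[OF p[unfolded W_def] \<open>even k\<close>] by simp
    also have "\<dots> = d'"
      using rep[OF d'] alternating_sum_edge_labels[OF q[unfolded W_def] \<open>even k\<close>] labels by simp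
    finally have "d = d'" .
    then show "d = d' \<and> p = q"
      using edge_labels_inj[OF p[unfolded W_def]] q[unfolded W_def] labels by simp
  qed
  moreover have "(\<lambda>(d, p). edge_labels k p) ` (SIGMA d:diffset B B. W d)
      \<subseteq> {xs. set xs \<subseteq> C \<and> length xs = k}"
    unfolding W_def using edge_labels_in_lists by fast
  moreover have "w \<le> real (card (W d))" if "d \<in> diffset B B" for d
    using assms(7) rep[OF that] unfolding W_def by auto
  ultimately have "real (card (diffset B B)) * w \<le> real (card {xs. set xs \<subseteq> C \<and> length xs = k})"
    by (intro card_mult_le_of_inj_Sigma[OF finite_diffset[OF assms(4,4)] finite_lists_length_eq[OF \<open>finite C\<close>]])
  then show ?thesis
    using \<open>w > 0\<close> card_lists_length_eq[OF \<open>finite C\<close>] by (simp add: pos_le_divide_eq)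
qed

end
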